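(* Let $T \in \mathbb{R}^4 \otimes \mathbb{R}^4 \otimes \mathbb{R}^4$ be the structure tensor of quaternion multiplication with respect to the basis $(1,i,j,k)$ of $\mathbb{H}$, i.e. $T = \sum_{a,b} e_a \otimes e_b \otimes c(x_a x_b)$ where $x_1,\ldots,x_4 = 1,i,j,k$ and $c : \mathbb{H} \to \mathbb{R}^4$ is the coordinate map. Then $Q(T) = 2$, and there is a neighborhood of $T$ in the Euclidean topology in which every tensor has real subrank $2$.
   Context: $\mathbb{H}$ denotes Hamilton's quaternions: the real algebra with basis $1,i,j,k$, unit $1$, $i^2=j^2=k^2=-1$, $ij=k=-ji$, $jk=i=-kj$, $ki=j=-ik$. For $r \geq 0$ let $I_r := \sum_{j=1}^r e_j \otimes e_j \otimes e_j$. The subrank of $T \in \mathbb{R}^{n_1} \otimes \mathbb{R}^{n_2} \otimes \mathbb{R}^{n_3}$ is $Q(T) := \max\{ r \mid \exists\ \mathbb{R}\text{-linear } \varphi_i : \mathbb{R}^{n_i} \to \mathbb{R}^r,\ (\varphi_1 \otimes \varphi_2 \otimes \varphi_3) T = I_r\}$. *)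

theory Defs
  imports Complex_Main
begin

text \<open>Tensors in R^n1 (x) R^n2 (x) R^n3 are represented as functions
  nat => nat => nat => real, only entries with indices below n_i matter.
  A linear map R^n -> R^r is represented by its r x n matrix (nat => nat => real).\<close>

type_synonym tensor3 = "nat \<Rightarrow> nat \<Rightarrow> nat \<Rightarrow> real"

definition unit_tensor :: "nat \<Rightarrow> tensor3" where
  "unit_tensor r = (\<lambda>i j k. if i = j \<and> j = k \<and> i < r then 1 else 0)"

definition restrict3 ::
  "(nat \<Rightarrow> nat \<Rightarrow> real) \<Rightarrow> (nat \<Rightarrow> nat \<Rightarrow> real) \<Rightarrow> (nat \<Rightarrow> nat \<Rightarrow> real)
   \<Rightarrow> nat \<Rightarrow> nat \<Rightarrow> nat \<Rightarrow> tensor3 \<Rightarrow> tensor3" where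
  "restrict3 A B C n1 n2 n3 T = (\<lambda>i j k.
     \<Sum>a<n1. \<Sum>b<n2. \<Sum>c<n3. A i a * B j b * C k c * T a b c)"

definition subrank_achievable :: "nat \<Rightarrow> nat \<Rightarrow> nat \<Rightarrow> tensor3 \<Rightarrow> nat \<Rightarrow> bool" where
  "subrank_achievable n1 n2 n3 T r \<longleftrightarrow>
     (\<exists>A B C. \<forall>i<r. \<forall>j<r. \<forall>k<r.
        restrict3 A B C n1 n2 n3 T i j k = unit_tensor r i j k)"

definition subrank :: "nat \<Rightarrow> nat \<Rightarrow> nat \<Rightarrow> tensor3 \<Rightarrow> nat" where
  "subrank n1 n2 n3 T = Max {r. subrank_achievable n1 n2 n3 T r}"

text \<open>Hamilton product on coordinate vectors w.r.t. basis (1,i,j,k) = indices 0,1,2,3.\<close>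
definition hmult :: "(nat \<Rightarrow> real) \<Rightarrow> (nat \<Rightarrow> real) \<Rightarrow> (nat \<Rightarrow> real)" where
  "hmult p q = (\<lambda>c.
     if c = 0 then p 0 * q 0 - p 1 * q 1 - p 2 * q 2 - p 3 * q 3
     else if c = 1 then p 0 * q 1 + p 1 * q 0 + p 2 * q 3 - p 3 * q 2
     else if c = 2 then p 0 * q 2 - p 1 * q 3 + p 2 * q 0 + p 3 * q 1
     else if c = 3 then p 0 * q 3 + p 1 * q 2 - p 2 * q 1 + p 3 * q 0
     else 0)"

definition basis_vec :: "nat \<Rightarrow> nat \<Rightarrow> real" where
  "basis_vec a = (\<lambda>i. if i = a then 1 else 0)"

definition quat_tensor :: tensor3 where
  "quat_tensor = (\<lambda>a b c. if a < 4 \<and> b < 4 then hmult (basis_vec a) (basis_vec b) c else 0)"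

end

theory Submission
  imports Defs "HOL-Analysis.Convex"
begin

text \<open>For the quaternions |x y| = |x| |y|, and by Cauchy-Schwarz a perturbation E of the structure
  tensor changes the product x y by at most |x| |y| times the Frobenius norm of E. So every tensor
  at distance less than 1 from the quaternion tensor still has no zero divisors. For such a tensor a
  restriction to I_r by maps A, B, C gives, with x = A 0, two linearly independent families
  C 0, ..., C (r - 1) and x B 1, ..., x B (r - 1) in R^4 spanning orthogonal subspaces, hence
  2 r - 1 \<le> 4 and r \<le> 2. Conversely, restricting the second and third factors to the
  coordinates of 1, i and of 1, j, a restriction to I_2 amounts to solving linear systems whose
  4 x 4 matrix is close to a signed permutation matrix, hence invertible.\<close>

lemma homogeneous_system_nontrivial_solution:
  fixes M :: "'i \<Rightarrow> 'j \<Rightarrow> 'a::field"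
  assumes "finite I" and "finite J" and "card I < card J"
  shows "\<exists>x. (\<exists>j\<in>J. x j \<noteq> 0) \<and> (\<forall>i\<in>I. (\<Sum>j\<in>J. M i j * x j) = 0)"
  using assms
proof (induction I arbitrary: J M rule: finite_induct)
  case empty
  then obtain j where "j \<in> J" by fastforce
  then show ?case by (intro exI[of _ "\<lambda>_. 1"]) auto
next
  case (insert i0 I)
  show ?case
  proof (cases "\<forall>j\<in>J. M i0 j = 0")
    case True
    obtain x where "\<exists>j\<in>J. x j \<noteq> 0" "\<forall>i\<in>I. (\<Sum>j\<in>J. M i j * x j) = 0"
      using insert.IH[of J M] insert.hyps insert.prems by auto
    with True show ?thesis by auto
  next
    case False
    then obtain p where p: "p \<in> J" "M i0 p \<noteq> 0" by blast
    define M' where "M' i j = M i j - M i p * M i0 j / M i0 p" for i j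
    have "card I < card (J - {p})"
      using insert.hyps insert.prems p by simp
    then obtain x' where x': "\<exists>j\<in>J - {p}. x' j \<noteq> 0"
      "\<forall>i\<in>I. (\<Sum>j\<in>J - {p}. M' i j * x' j) = 0"
      using insert.IH[of "J - {p}" M'] insert.prems by auto
    define x where "x = x'(p := - (\<Sum>j\<in>J - {p}. M i0 j * x' j) / M i0 p)"
    have x_sum: "(\<Sum>j\<in>J. M i j * x j) = M i p * x p + (\<Sum>j\<in>J - {p}. M i j * x' j)" for i
      using insert.prems p by (simp add: sum.remove x_def)
    have "(\<Sum>j\<in>J. M i0 j * x j) = 0"
      using p unfolding x_sum by (simp add: x_def)
    moreover have "(\<Sum>j\<in>J. M i j * x j) = (\<Sum>j\<in>J - {p}. M' i j * x' j)" for i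
      unfolding x_sum by (simp add: x_def M'_def sum_subtractf sum_distrib_left sum_divide_distrib
          algebra_simps)
    moreover have "\<exists>j\<in>J. x j \<noteq> 0"
      using x'(1) by (auto simp: x_def)
    ultimately show ?thesis
      using x'(2) by (intro exI[of _ x]) auto
  qed
qed

lemma injective_system_solvable:
  fixes M :: "'i \<Rightarrow> 'j \<Rightarrow> 'a::field"
  assumes "finite I" and "finite J" and "card I \<le> card J"
    and inj: "\<And>x. \<forall>i\<in>I. (\<Sum>j\<in>J. M i j * x j) = 0 \<Longrightarrow> \<forall>j\<in>J. x j = 0"
  shows "\<exists>x. \<forall>i\<in>I. (\<Sum>j\<in>J. M i j * x j) = b i"
proof -
  \<comment> \<open>adjoin the right-hand side as an extra column, indexed by None\<close>
  define M' where "M' i = (\<lambda>j. case j of None \<Rightarrow> - b i | Some j \<Rightarrow> M i j)" for i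
  have sum_M': "(\<Sum>j\<in>insert None (Some ` J). M' i j * x j) =
      (\<Sum>j\<in>J. M i j * x (Some j)) - b i * x None" for i x
    using assms(2) by (simp add: M'_def sum.reindex)
  have "card I < card (insert None (Some ` J))"
    using assms(2,3) by (simp add: card_image)
  then obtain x where x: "\<exists>j\<in>insert None (Some ` J). x j \<noteq> 0"
    and sol: "\<forall>i\<in>I. (\<Sum>j\<in>J. M i j * x (Some j)) = b i * x None"
    using homogeneous_system_nontrivial_solution[of I "insert None (Some ` J)" M'] assms(1,2)
    by (auto simp: sum_M')
  have "x None \<noteq> 0"
  proof
    assume "x None = 0"
    then have "\<forall>j\<in>J. x (Some j) = 0"
      using sol by (intro inj) simp
    with x \<open>x None = 0\<close> show False by auto
  qed
  then have "\<forall>i\<in>I. (\<Sum>j\<in>J. M i j * (x (Some j) / x None)) = b i"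
    using sol by (simp add: sum_divide_distrib[symmetric] times_divide_eq_right)
  then show ?thesis
    by (intro exI[of _ "\<lambda>j. x (Some j) / x None"])
qed

lemma perturbed_isometry_injective:
  fixes P E :: "'i \<Rightarrow> 'j \<Rightarrow> real"
  assumes "finite J"
    and iso: "(\<Sum>i\<in>I. (\<Sum>j\<in>J. P i j * y j)\<^sup>2) = \<kappa> * (\<Sum>j\<in>J. (y j)\<^sup>2)"
    and small: "(\<Sum>i\<in>I. \<Sum>j\<in>J. (E i j)\<^sup>2) < \<kappa>"
    and zero: "\<forall>i\<in>I. (\<Sum>j\<in>J. (P i j + E i j) * y j) = 0"
  shows "\<forall>j\<in>J. y j = 0"
proof -
  let ?Y = "\<Sum>j\<in>J. (y j)\<^sup>2"
  have "\<kappa> * ?Y = (\<Sum>i\<in>I. (\<Sum>j\<in>J. E i j * y j)\<^sup>2)"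
    unfolding iso[symmetric]
  proof (rule sum.cong)
    fix i assume "i \<in> I"
    then have "(\<Sum>j\<in>J. P i j * y j) = - (\<Sum>j\<in>J. E i j * y j)"
      using zero by (simp add: distrib_right sum.distrib eq_neg_iff_add_eq_0)
    then show "(\<Sum>j\<in>J. P i j * y j)\<^sup>2 = (\<Sum>j\<in>J. E i j * y j)\<^sup>2"
      by simp
  qed simp
  also have "\<dots> \<le> (\<Sum>i\<in>I. (\<Sum>j\<in>J. (E i j)\<^sup>2) * ?Y)"
    by (intro sum_mono Cauchy_Schwarz_ineq_sum)
  also have "\<dots> = (\<Sum>i\<in>I. \<Sum>j\<in>J. (E i j)\<^sup>2) * ?Y"
    by (simp add: sum_distrib_right)
  finally have le: "\<kappa> * ?Y \<le> (\<Sum>i\<in>I. \<Sum>j\<in>J. (E i j)\<^sup>2) * ?Y" .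
  have "?Y = 0"
  proof (rule ccontr)
    assume "?Y \<noteq> 0"
    then have "?Y > 0"
      by (simp add: order_less_le sum_nonneg)
    with small le show False
      by (meson mult_strict_right_mono not_le)
  qed
  then show ?thesis
    using \<open>finite J\<close> by (simp add: sum_nonneg_eq_0_iff)
qed

definition tensor_mult ::
  "nat \<Rightarrow> nat \<Rightarrow> tensor3 \<Rightarrow> (nat \<Rightarrow> real) \<Rightarrow> (nat \<Rightarrow> real) \<Rightarrow> nat \<Rightarrow> real" where
  "tensor_mult n1 n2 T x y = (\<lambda>c. \<Sum>a<n1. \<Sum>b<n2. x a * y b * T a b c)"

definition tensor_form ::
  "nat \<Rightarrow> nat \<Rightarrow> nat \<Rightarrow> tensor3 \<Rightarrow> (nat \<Rightarrow> real) \<Rightarrow> (nat \<Rightarrow> real) \<Rightarrow> (nat \<Rightarrow> real) \<Rightarrow> real" where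
  "tensor_form n1 n2 n3 T x y z = (\<Sum>c<n3. z c * tensor_mult n1 n2 T x y c)"

lemma restrict3_eq_tensor_form:
  "restrict3 A B C n1 n2 n3 T i j k = tensor_form n1 n2 n3 T (A i) (B j) (C k)"
proof -
  have "tensor_form n1 n2 n3 T (A i) (B j) (C k) =
      (\<Sum>c<n3. \<Sum>a<n1. \<Sum>b<n2. A i a * B j b * C k c * T a b c)"
    unfolding tensor_form_def tensor_mult_def by (simp add: sum_distrib_left ac_simps)
  also have "\<dots> = restrict3 A B C n1 n2 n3 T i j k"
    unfolding restrict3_def by (simp add: sum.swap[of _ "{..<n3}"])
  finally show ?thesis ..
qed

lemma tensor_mult_sum_right:
  "tensor_mult n1 n2 T x (\<lambda>b. \<Sum>s\<in>S. u s * y s b) c =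
    (\<Sum>s\<in>S. u s * tensor_mult n1 n2 T x (y s) c)"
  unfolding tensor_mult_def
  by (simp add: sum_distrib_left sum_distrib_right sum.swap[of _ S] ac_simps)

lemma tensor_form_sum_mid:
  "tensor_form n1 n2 n3 T x (\<lambda>b. \<Sum>s\<in>S. u s * y s b) z =
    (\<Sum>s\<in>S. u s * tensor_form n1 n2 n3 T x (y s) z)"
  unfolding tensor_form_def tensor_mult_sum_right
  by (simp add: sum_distrib_left sum.swap[of _ S] ac_simps)

lemma tensor_form_sum_right:
  "tensor_form n1 n2 n3 T x y (\<lambda>c. \<Sum>s\<in>S. u s * z s c) =
    (\<Sum>s\<in>S. u s * tensor_form n1 n2 n3 T x y (z s))"
  unfolding tensor_form_def
  by (simp add: sum_distrib_left sum_distrib_right sum.swap[of _ S] ac_simps)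

lemma tensor_form_eq_0_left: "\<forall>a<n1. x a = 0 \<Longrightarrow> tensor_form n1 n2 n3 T x y z = 0"
  by (simp add: tensor_form_def tensor_mult_def)

lemma tensor_form_eq_0_mid: "\<forall>b<n2. y b = 0 \<Longrightarrow> tensor_form n1 n2 n3 T x y z = 0"
  by (simp add: tensor_form_def tensor_mult_def)

lemma tensor_form_eq_0_right: "\<forall>c<n3. z c = 0 \<Longrightarrow> tensor_form n1 n2 n3 T x y z = 0"
  by (simp add: tensor_form_def)

lemma tensor_form_basis_vec:
  assumes "b < n2" and "c < n3"
  shows "tensor_form n1 n2 n3 T x (basis_vec b) (basis_vec c) = (\<Sum>a<n1. x a * T a b c)"
  using assms unfolding tensor_form_def tensor_mult_def basis_vec_def
  by (simp add: if_distrib[of "\<lambda>t. t * _"] if_distrib[of "\<lambda>t. _ * t"] sum.delta' cong: if_cong)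

lemma subrank_eqI:
  assumes "subrank_achievable n1 n2 n3 T r"
    and "\<And>s. subrank_achievable n1 n2 n3 T s \<Longrightarrow> s \<le> r"
  shows "subrank n1 n2 n3 T = r"
proof -
  have "{s. subrank_achievable n1 n2 n3 T s} \<subseteq> {..r}"
    using assms(2) by blast
  then have "finite {s. subrank_achievable n1 n2 n3 T s}"
    using finite_subset by blast
  then show ?thesis
    unfolding subrank_def by (rule Max_eqI) (use assms in simp_all)
qed

lemma subrank_achievable_by_coordinate_slices:
  assumes "n1 = r * r" and "\<forall>j<r. \<beta> j < n2" and "\<forall>k<r. \<gamma> k < n3"
    and inj: "\<And>x. \<forall>(j, k)\<in>{..<r} \<times> {..<r}. (\<Sum>a<n1. T a (\<beta> j) (\<gamma> k) * x a) = 0 \<Longrightarrow>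
      \<forall>a<n1. x a = 0"
  shows "subrank_achievable n1 n2 n3 T r"
proof -
  let ?solves = "\<lambda>i x. \<forall>(j, k)\<in>{..<r} \<times> {..<r}. (\<Sum>a<n1. T a (\<beta> j) (\<gamma> k) * x a) = unit_tensor r i j k"
  have "\<forall>i. \<exists>x. ?solves i x"
  proof
    fix i
    show "\<exists>x. ?solves i x"
      using injective_system_solvable[where I = "{..<r} \<times> {..<r}" and J = "{..<n1}"
        and M = "\<lambda>(j, k) a. T a (\<beta> j) (\<gamma> k)" and b = "\<lambda>(j, k). unit_tensor r i j k"]
        assms(1) inj by (auto simp: case_prod_beta)
  qed
  then obtain A where A: "\<forall>i. ?solves i (A i)"
    by (auto dest: choice)
  have "restrict3 A (\<lambda>j. basis_vec (\<beta> j)) (\<lambda>k. basis_vec (\<gamma> k)) n1 n2 n3 T i j k =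
      unit_tensor r i j k" if "j < r" "k < r" for i j k
  proof -
    have "restrict3 A (\<lambda>j. basis_vec (\<beta> j)) (\<lambda>k. basis_vec (\<gamma> k)) n1 n2 n3 T i j k =
        (\<Sum>a<n1. T a (\<beta> j) (\<gamma> k) * A i a)"
      using assms(2,3) that by (simp add: restrict3_eq_tensor_form tensor_form_basis_vec mult.commute)
    then show ?thesis
      using A that by auto
  qed
  then show ?thesis
    unfolding subrank_achievable_def by (intro exI allI impI)
qed

lemma tensor_form_unit_sum_mid:
  assumes "\<forall>i<r. \<forall>j<r. \<forall>k<r. tensor_form n1 n2 n3 T (A i) (B j) (C k) = unit_tensor r i j k"
    and "S \<subseteq> {..<r}" and "i < r" and "k < r"
  shows "tensor_form n1 n2 n3 T (A i) (\<lambda>b. \<Sum>j\<in>S. u j * B j b) (C k) = (if i = k \<and> i \<in> S then u i else 0)"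
proof -
  have "tensor_form n1 n2 n3 T (A i) (\<lambda>b. \<Sum>j\<in>S. u j * B j b) (C k) =
      (\<Sum>j\<in>S. if j = i then (if i = k then u i else 0) else 0)"
    unfolding tensor_form_sum_mid using assms by (intro sum.cong) (auto simp: unit_tensor_def)
  also have "\<dots> = (if i = k \<and> i \<in> S then u i else 0)"
    using finite_subset[OF assms(2)] by (simp add: sum.delta')
  finally show ?thesis .
qed

lemma tensor_form_unit_sum_right:
  assumes "\<forall>i<r. \<forall>j<r. \<forall>k<r. tensor_form n1 n2 n3 T (A i) (B j) (C k) = unit_tensor r i j k"
    and "S \<subseteq> {..<r}" and "i < r" and "j < r"
  shows "tensor_form n1 n2 n3 T (A i) (B j) (\<lambda>c. \<Sum>k\<in>S. u k * C k c) = (if i = j \<and> i \<in> S then u i else 0)"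
proof -
  have "tensor_form n1 n2 n3 T (A i) (B j) (\<lambda>c. \<Sum>k\<in>S. u k * C k c) =
      (\<Sum>k\<in>S. if k = i then (if i = j then u i else 0) else 0)"
    unfolding tensor_form_sum_right using assms by (intro sum.cong) (auto simp: unit_tensor_def)
  also have "\<dots> = (if i = j \<and> i \<in> S then u i else 0)"
    using finite_subset[OF assms(2)] by (simp add: sum.delta')
  finally show ?thesis .
qed

definition zero_divisor_free :: "nat \<Rightarrow> nat \<Rightarrow> nat \<Rightarrow> tensor3 \<Rightarrow> bool" where
  "zero_divisor_free n1 n2 n3 T \<longleftrightarrow>
     (\<forall>x y. (\<forall>c<n3. tensor_mult n1 n2 T x y c = 0) \<longrightarrow> (\<forall>a<n1. x a = 0) \<or> (\<forall>b<n2. y b = 0))"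

theorem zero_divisor_free_imp_subrank_achievable_le:
  assumes zdf: "zero_divisor_free n1 n2 n3 T" and "subrank_achievable n1 n2 n3 T r"
  shows "2 * r \<le> n3 + 1"
proof (rule ccontr)
  assume "\<not> 2 * r \<le> n3 + 1"
  then have r: "0 < r" "n3 < 2 * r - 1"
    by auto
  obtain A B C where D: "\<forall>i<r. \<forall>j<r. \<forall>k<r. tensor_form n1 n2 n3 T (A i) (B j) (C k) = unit_tensor r i j k"
    using assms(2) by (auto simp: subrank_achievable_def restrict3_eq_tensor_form)
  define x where "x = A 0"
  have x_nonzero: "\<not> (\<forall>a<n1. x a = 0)"
    using D r tensor_form_eq_0_left[of n1 x n2 n3 T "B 0" "C 0"] by (auto simp: x_def unit_tensor_def)
  \<comment> \<open>C 0, ..., C (r - 1) and x B 1, ..., x B (r - 1) would be 2 r - 1 independent vectors in R^n3\<close>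
  define J where "J = {..<r} <+> {1..<r}"
  define M where "M c = (\<lambda>j. case j of Inl k \<Rightarrow> C k c | Inr j \<Rightarrow> tensor_mult n1 n2 T x (B j) c)" for c
  have "card {..<n3} < card J"
    using r by (simp add: J_def card_Plus)
  then obtain u where u_nonzero: "\<exists>j\<in>J. u j \<noteq> 0" and u: "\<forall>c<n3. (\<Sum>j\<in>J. M c j * u j) = 0"
    using homogeneous_system_nontrivial_solution[of "{..<n3}" J M] by (auto simp: J_def)
  define z where "z = (\<lambda>c. \<Sum>k<r. u (Inl k) * C k c)"
  define y where "y = (\<lambda>b. \<Sum>j\<in>{1..<r}. u (Inr j) * B j b)"
  define v where "v = tensor_mult n1 n2 T x y"
  have zv: "z c + v c = 0" if "c < n3" for c
    using u that unfolding v_def y_def tensor_mult_sum_right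
    by (simp add: J_def M_def z_def sum.Plus ac_simps)
  have orth: "(\<Sum>c<n3. C k c * v c) = 0" if "k < r" for k
    using tensor_form_unit_sum_mid[OF D, of "{1..<r}" 0 k "\<lambda>j. u (Inr j)"] r that
    by (simp add: tensor_form_def v_def y_def x_def subset_eq)
  have "(\<Sum>c<n3. z c * v c) = (\<Sum>k<r. u (Inl k) * (\<Sum>c<n3. C k c * v c))"
    unfolding z_def by (simp add: sum_distrib_left sum_distrib_right mult.assoc sum.swap[of _ "{..<r}"])
  also have "\<dots> = 0"
    using orth by simp
  finally have "(\<Sum>c<n3. (v c)\<^sup>2) = 0"
    using zv by (simp add: power2_eq_square eq_neg_iff_add_eq_0[symmetric] sum_negf)
  then have v_zero: "\<forall>c<n3. v c = 0"
    by (simp add: sum_nonneg_eq_0_iff)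
  then have y_zero: "\<forall>b<n2. y b = 0"
    using zdf x_nonzero by (auto simp: zero_divisor_free_def v_def)
  have "u (Inr j) = 0" if "j \<in> {1..<r}" for j
    using tensor_form_unit_sum_mid[OF D, of "{1..<r}" j j "\<lambda>j. u (Inr j)"] tensor_form_eq_0_mid[OF y_zero] that
    by (auto simp: y_def subset_eq)
  moreover have "u (Inl k) = 0" if "k < r" for k
  proof -
    have "\<forall>c<n3. z c = 0"
      using zv v_zero by simp
    then show ?thesis
      using tensor_form_unit_sum_right[OF D, of "{..<r}" k k "\<lambda>k. u (Inl k)"] tensor_form_eq_0_right that
      by (auto simp: z_def)
  qed
  ultimately show False
    using u_nonzero by (auto simp: J_def)
qed

lemma tensor_mult_quat_tensor: "c < 4 \<Longrightarrow> tensor_mult 4 4 quat_tensor x y c = hmult x y c"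
  by (auto simp: tensor_mult_def quat_tensor_def hmult_def basis_vec_def numeral_eq_Suc lessThan_Suc
      less_Suc_eq algebra_simps)

lemma hmult_sum_squares: "(\<Sum>c<4. (hmult x y c)\<^sup>2) = (\<Sum>a<4. (x a)\<^sup>2) * (\<Sum>b<4. (y b)\<^sup>2)"
  by (simp add: hmult_def numeral_eq_Suc lessThan_Suc power2_eq_square algebra_simps)

lemma quat_tensor_coordinate_slices_isometry:
  "(\<Sum>(j, k)\<in>{..<2} \<times> {..<2}. (\<Sum>a<4. quat_tensor a j (2 * k) * x a)\<^sup>2) = (\<Sum>a<4. (x a)\<^sup>2)"
  by (simp add: sum.cartesian_product[symmetric] numeral_eq_Suc lessThan_Suc quat_tensor_def hmult_def basis_vec_def)

definition tensor_sqdist :: "nat \<Rightarrow> nat \<Rightarrow> nat \<Rightarrow> tensor3 \<Rightarrow> tensor3 \<Rightarrow> real" where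
  "tensor_sqdist n1 n2 n3 S T = (\<Sum>a<n1. \<Sum>b<n2. \<Sum>c<n3. (S a b c - T a b c)\<^sup>2)"

lemma zero_divisor_free_near_quat_tensor:
  assumes near: "tensor_sqdist 4 4 4 T quat_tensor < 1"
  shows "zero_divisor_free 4 4 4 T"
  unfolding zero_divisor_free_def
proof (intro allI impI)
  fix x y :: "nat \<Rightarrow> real"
  assume xy: "\<forall>c<4. tensor_mult 4 4 T x y c = 0"
  let ?X = "\<Sum>a<4. (x a)\<^sup>2"
  show "(\<forall>a<4. x a = 0) \<or> (\<forall>b<4. y b = 0)"
  proof (cases "?X = 0")
    case True
    then show ?thesis
      by (simp add: sum_nonneg_eq_0_iff)
  next
    case False
    then have X_pos: "?X > 0"
      by (simp add: order_less_le sum_nonneg)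
    define P where "P c b = (\<Sum>a<4. x a * quat_tensor a b c)" for c b
    define E where "E c b = (\<Sum>a<4. x a * (T a b c - quat_tensor a b c))" for c b
    have P_plus_E: "P c b + E c b = (\<Sum>a<4. x a * T a b c)" for c b
      unfolding P_def E_def sum.distrib[symmetric] by (simp add: algebra_simps)
    have P_E: "(\<Sum>b<4. (P c b + E c b) * y b) = tensor_mult 4 4 T x y c" for c
      unfolding P_plus_E tensor_mult_def sum_distrib_right by (subst sum.swap) (simp add: ac_simps)
    have "(\<Sum>b<4. P c b * y b) = tensor_mult 4 4 quat_tensor x y c" for c
      unfolding P_def tensor_mult_def sum_distrib_right by (subst sum.swap) (simp add: ac_simps)
    then have iso: "(\<Sum>c<4. (\<Sum>b<4. P c b * y b)\<^sup>2) = ?X * (\<Sum>b<4. (y b)\<^sup>2)"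
      by (simp add: tensor_mult_quat_tensor hmult_sum_squares)
    let ?d = "\<lambda>a b c. (T a b c - quat_tensor a b c)\<^sup>2"
    have "(\<Sum>c<4. \<Sum>b<4. \<Sum>a<4. ?d a b c) = (\<Sum>c<4. \<Sum>a<4. \<Sum>b<4. ?d a b c)"
      by (intro sum.cong refl sum.swap)
    also have "\<dots> = (\<Sum>a<4. \<Sum>c<4. \<Sum>b<4. ?d a b c)"
      by (rule sum.swap)
    also have "\<dots> = tensor_sqdist 4 4 4 T quat_tensor"
      unfolding tensor_sqdist_def by (intro sum.cong refl sum.swap)
    finally have sqdist: "(\<Sum>c<4. \<Sum>b<4. \<Sum>a<4. ?d a b c) = tensor_sqdist 4 4 4 T quat_tensor" .
    have "(\<Sum>c<4. \<Sum>b<4. (E c b)\<^sup>2) \<le> (\<Sum>c<4. \<Sum>b<4. ?X * (\<Sum>a<4. ?d a b c))"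
      unfolding E_def by (intro sum_mono Cauchy_Schwarz_ineq_sum)
    also have "\<dots> = ?X * tensor_sqdist 4 4 4 T quat_tensor"
      by (simp add: sum_distrib_left flip: sqdist)
    also have "\<dots> < ?X"
      using near X_pos by simp
    finally have "\<forall>b\<in>{..<4}. y b = 0"
      using perturbed_isometry_injective[OF _ iso] P_E xy by simp
    then show ?thesis
      by simp
  qed
qed

lemma subrank_achievable_2_near_quat_tensor:
  assumes near: "tensor_sqdist 4 4 4 T quat_tensor < 1"
  shows "subrank_achievable 4 4 4 T 2"
proof (rule subrank_achievable_by_coordinate_slices[where \<beta> = id and \<gamma> = "\<lambda>k. 2 * k"])
  fix x :: "nat \<Rightarrow> real"
  assume x: "\<forall>(j, k)\<in>{..<2} \<times> {..<2}. (\<Sum>a<4. T a (id j) (2 * k) * x a) = 0"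
  define P where "P = (\<lambda>(j, k) a. quat_tensor a j (2 * k))"
  define E where "E = (\<lambda>(j, k) a. T a j (2 * k) - quat_tensor a j (2 * k))"
  let ?d = "\<lambda>a b c. (T a b c - quat_tensor a b c)\<^sup>2"
  have "?d a b 0 + ?d a b 2 \<le> (\<Sum>c<4. ?d a b c)" for a b
    by (simp add: numeral_eq_Suc lessThan_Suc)
  then have "(\<Sum>p\<in>{..<2} \<times> {..<2}. \<Sum>a<4. (E p a)\<^sup>2) \<le> (\<Sum>a<4. \<Sum>b<2. \<Sum>c<4. ?d a b c)"
    by (simp add: E_def sum.cartesian_product[symmetric] numeral_eq_Suc lessThan_Suc sum.distrib[symmetric]
        sum_mono)
  also have "\<dots> \<le> tensor_sqdist 4 4 4 T quat_tensor"
    unfolding tensor_sqdist_def by (intro sum_mono sum_mono2) (auto intro: sum_nonneg)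
  also have "\<dots> < 1"
    by (fact near)
  finally have small: "(\<Sum>p\<in>{..<2} \<times> {..<2}. \<Sum>a<4. (E p a)\<^sup>2) < 1" .
  have iso: "(\<Sum>p\<in>{..<2} \<times> {..<2}. (\<Sum>a<4. P p a * x a)\<^sup>2) = 1 * (\<Sum>a<4. (x a)\<^sup>2)"
    using quat_tensor_coordinate_slices_isometry by (simp add: P_def case_prod_beta)
  have "\<forall>p\<in>{..<2} \<times> {..<2}. (\<Sum>a<4. (P p a + E p a) * x a) = 0"
    using x by (auto simp: P_def E_def)
  then show "\<forall>a<4. x a = 0"
    using perturbed_isometry_injective[OF _ iso small] by simp
qed auto

theorem subrank_near_quat_tensor:
  assumes "tensor_sqdist 4 4 4 T quat_tensor < 1"
  shows "subrank 4 4 4 T = 2"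
proof (rule subrank_eqI)
  show "subrank_achievable 4 4 4 T 2"
    using assms by (rule subrank_achievable_2_near_quat_tensor)
  fix s
  assume "subrank_achievable 4 4 4 T s"
  with zero_divisor_free_near_quat_tensor[OF assms] have "2 * s \<le> 4 + 1"
    by (rule zero_divisor_free_imp_subrank_achievable_le)
  then show "s \<le> 2"
    by simp
qed

theorem lemma4p12:
  shows "subrank 4 4 4 quat_tensor = 2 \<and>
    (\<exists>\<epsilon>>0. \<forall>T'::tensor3.
       (\<Sum>a<4. \<Sum>b<4. \<Sum>c<4. (T' a b c - quat_tensor a b c)\<^sup>2) < \<epsilon>\<^sup>2
       \<longrightarrow> subrank 4 4 4 T' = 2)"
proof
  show "subrank 4 4 4 quat_tensor = 2"
    by (rule subrank_near_quat_tensor) (simp add: tensor_sqdist_def)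
  have "subrank 4 4 4 T' = 2"
    if "(\<Sum>a<4. \<Sum>b<4. \<Sum>c<4. (T' a b c - quat_tensor a b c)\<^sup>2) < 1\<^sup>2" for T'
    using that by (intro subrank_near_quat_tensor) (simp add: tensor_sqdist_def)
  then show "\<exists>\<epsilon>>0. \<forall>T'::tensor3.
       (\<Sum>a<4. \<Sum>b<4. \<Sum>c<4. (T' a b c - quat_tensor a b c)\<^sup>2) < \<epsilon>\<^sup>2
       \<longrightarrow> subrank 4 4 4 T' = 2"
    by (intro exI[of _ 1]) auto
qed

end
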